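(* Let $\mathcal{P}$ be a nonempty finite poset, $m=\max_{p\in\mathcal{P}}(|{\downarrow}p|+|{\uparrow}p|)$, and let $\mathcal{A},\mathcal{B}$ be nonempty dual families of downsets over $\mathcal{L}(\mathcal{P})$, with $N=|\mathcal{A}|+|\mathcal{B}|$. Then at least one of the following holds: (i) there is $p\in\mathcal{P}$ with $\mathrm{freq}_{\mathcal{A}}(p)\ge\frac{1}{m\log_{4/3}N}$; (ii) there is $p\in\mathcal{P}$ with $\mathrm{freq}_{\overline{\mathcal{B}}}(p)\ge\frac{1}{m^2\log_{4/3}N}$.
   Context: For a finite poset $\mathcal{P}$, $\mathcal{L}(\mathcal{P})$ is the lattice of all downsets of $\mathcal{P}$ ordered by inclusion. ${\downarrow}p=\{q:q\le p\}$, ${\uparrow}p=\{q:q\ge p\}$. Two families $\mathcal{A},\mathcal{B}$ of downsets of $\mathcal{P}$ are dual over $\mathcal{L}(\mathcal{P})$ if $A\not\subseteq B$ for all $A\in\mathcal{A},B\in\mathcal{B}$, and for every downset $X$ of $\mathcal{P}$ either $X\subseteq B$ for some $B\in\mathcal{B}$ or $A\subseteq X$ for some $A\in\mathcal{A}$. For a family $\mathcal{C}$ of subsets of $\mathcal{P}$, $\mathrm{freq}_{\mathcal{C}}(p)=|\{C\in\mathcal{C}:p\in C\}|/|\mathcal{C}|$, and $\overline{\mathcal{C}}=\{\mathcal{P}\setminus C: C\in\mathcal{C}\}$, so $\mathrm{freq}_{\overline{\mathcal{B}}}(p)=|\{B\in\mathcal{B}:p\notin B\}|/|\mathcal{B}|$.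 *)

theory Defs
  imports Main "HOL-Library.Log_Nat" Complex_Main
begin

definition partial_order_on_set :: "'a set \<Rightarrow> ('a \<Rightarrow> 'a \<Rightarrow> bool) \<Rightarrow> bool" where
  "partial_order_on_set P le \<longleftrightarrow>
     (\<forall>x\<in>P. le x x) \<and>
     (\<forall>x\<in>P. \<forall>y\<in>P. le x y \<and> le y x \<longrightarrow> x = y) \<and>
     (\<forall>x\<in>P. \<forall>y\<in>P. \<forall>z\<in>P. le x y \<and> le y z \<longrightarrow> le x z)"

definition is_downset :: "'a set \<Rightarrow> ('a \<Rightarrow> 'a \<Rightarrow> bool) \<Rightarrow> 'a set \<Rightarrow> bool" where
  "is_downset P le D \<longleftrightarrow> D \<subseteq> P \<and> (\<forall>x\<in>D. \<forall>y\<in>P. le y x \<longrightarrow> y \<in> D)"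

definition down :: "'a set \<Rightarrow> ('a \<Rightarrow> 'a \<Rightarrow> bool) \<Rightarrow> 'a \<Rightarrow> 'a set" where
  "down P le p = {q\<in>P. le q p}"

definition up :: "'a set \<Rightarrow> ('a \<Rightarrow> 'a \<Rightarrow> bool) \<Rightarrow> 'a \<Rightarrow> 'a set" where
  "up P le p = {q\<in>P. le p q}"

definition dual_over :: "'a set \<Rightarrow> ('a \<Rightarrow> 'a \<Rightarrow> bool) \<Rightarrow> 'a set set \<Rightarrow> 'a set set \<Rightarrow> bool" where
  "dual_over P le \<A> \<B> \<longleftrightarrow>
     (\<forall>A\<in>\<A>. \<forall>B\<in>\<B>. \<not> A \<subseteq> B) \<and>
     (\<forall>X. is_downset P le X \<longrightarrow> (\<exists>B\<in>\<B>. X \<subseteq> B) \<or> (\<exists>A\<in>\<A>. A \<subseteq> X))"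

definition freq :: "'a set set \<Rightarrow> 'a \<Rightarrow> real" where
  "freq \<C> p = real (card {C\<in>\<C>. p \<in> C}) / real (card \<C>)"

definition compl_family :: "'a set \<Rightarrow> 'a set set \<Rightarrow> 'a set set" where
  "compl_family P \<C> = (\<lambda>C. P - C) ` \<C>"

end

theory Submission
  imports Defs "HOL-Library.Disjoint_Sets"
begin

text \<open>
  Choose Z \<subseteq> P at random, leaving out each element independently with probability q, where
  q^m = 1/2. By duality the downset generated by Z either lies in some B \<in> \<B>, and then
  Z \<subseteq> B, or contains some A \<in> \<A>; so the probabilities of these N = |\<A>| + |\<B>| events add up
  to at least 1. Every A meets every P - B, so if no element is frequent, every P - B and every A
  is large. A large P - B makes Pr[Z \<subseteq> B] = q^|P - B| small; a large A contains |A|/m^2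
  elements with pairwise disjoint up-sets, each of which Z must meet, so the probability that
  the downset generated by Z contains A is at most 2^(-|A|/m^2). Both bounds are below 1/N,
  a contradiction.
\<close>

text \<open>
  The probability of drawing Z \<subseteq> S when each element of S is left out independently with
  probability q; \<open>event_weight q S E\<close> is then the probability of the event E.
\<close>

definition subset_weight :: "real \<Rightarrow> 'a set \<Rightarrow> 'a set \<Rightarrow> real" where
  "subset_weight q S Z = (1 - q) ^ card Z * q ^ card (S - Z)"

definition event_weight :: "real \<Rightarrow> 'a set \<Rightarrow> ('a set \<Rightarrow> bool) \<Rightarrow> real" where
  "event_weight q S E = (\<Sum>Z\<in>Pow S. subset_weight q S Z * of_bool (E Z))"

lemma subset_weight_nonneg: "0 \<le> q \<Longrightarrow> q \<le> 1 \<Longrightarrow> 0 \<le> subset_weight q S Z"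
  by (simp add: subset_weight_def)

lemma event_weight_cong:
  "(\<And>Z. Z \<subseteq> S \<Longrightarrow> E Z \<longleftrightarrow> F Z) \<Longrightarrow> event_weight q S E = event_weight q S F"
  unfolding event_weight_def by (intro sum.cong) auto

lemma event_weight_False [simp]: "event_weight q S (\<lambda>_. False) = 0"
  by (simp add: event_weight_def)

lemma event_weight_mono:
  assumes "0 \<le> q" "q \<le> 1" "\<And>Z. Z \<subseteq> S \<Longrightarrow> E Z \<Longrightarrow> F Z"
  shows "event_weight q S E \<le> event_weight q S F"
  unfolding event_weight_def
  using assms subset_weight_nonneg[OF assms(1,2)] by (intro sum_mono) (auto intro: mult_left_mono)

lemma event_weight_disj_le:
  assumes "0 \<le> q" "q \<le> 1"
  shows "event_weight q S (\<lambda>Z. E Z \<or> F Z) \<le> event_weight q S E + event_weight q S F"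
  unfolding event_weight_def sum.distrib[symmetric] distrib_left[symmetric]
  using subset_weight_nonneg[OF assms] by (intro sum_mono mult_left_mono) auto

lemma event_weight_Bex_le:
  assumes "0 \<le> q" "q \<le> 1" "finite I"
  shows "event_weight q S (\<lambda>Z. \<exists>i\<in>I. E i Z) \<le> (\<Sum>i\<in>I. event_weight q S (E i))"
  using assms(3)
proof (induction I rule: finite_induct)
  case (insert i I)
  have "event_weight q S (\<lambda>Z. \<exists>j\<in>insert i I. E j Z) = event_weight q S (\<lambda>Z. E i Z \<or> (\<exists>j\<in>I. E j Z))"
    by (intro event_weight_cong) auto
  also have "\<dots> \<le> event_weight q S (E i) + event_weight q S (\<lambda>Z. \<exists>j\<in>I. E j Z)"
    using assms(1,2) by (rule event_weight_disj_le)
  finally show ?case using insert by simp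
qed simp

lemma subset_weight_Un:
  assumes "finite S" "U \<subseteq> S" "X \<subseteq> U" "Y \<subseteq> S - U"
  shows "subset_weight q S (X \<union> Y) = subset_weight q U X * subset_weight q (S - U) Y"
proof -
  have fin: "finite U" "finite X" "finite Y" "finite (S - U)"
    using assms by (auto intro: finite_subset)
  have "card (X \<union> Y) = card X + card Y"
    using assms fin by (intro card_Un_disjoint) auto
  moreover have "S - (X \<union> Y) = (U - X) \<union> ((S - U) - Y)"
    using assms by auto
  moreover have "card ((U - X) \<union> ((S - U) - Y)) = card (U - X) + card ((S - U) - Y)"
    using fin by (intro card_Un_disjoint) auto
  ultimately show ?thesis
    by (simp add: subset_weight_def power_add mult_ac)
qed

lemma event_weight_independent:
  assumes "finite S" "U \<subseteq> S"
  shows "event_weight q S (\<lambda>Z. E (Z \<inter> U) \<and> F (Z - U))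
    = event_weight q U E * event_weight q (S - U) F"
proof -
  have bij: "bij_betw (\<lambda>(X, Y). X \<union> Y) (Pow U \<times> Pow (S - U)) (Pow S)"
    by (rule bij_betw_byWitness[where f'="\<lambda>Z. (Z \<inter> U, Z - U)"]) (use assms in auto)
  have "event_weight q U E * event_weight q (S - U) F
      = (\<Sum>(X, Y)\<in>Pow U \<times> Pow (S - U).
          subset_weight q U X * of_bool (E X) * (subset_weight q (S - U) Y * of_bool (F Y)))"
    by (simp add: event_weight_def sum_product sum.cartesian_product)
  also have "\<dots> = (\<Sum>(X, Y)\<in>Pow U \<times> Pow (S - U).
      subset_weight q S (X \<union> Y) * of_bool (E ((X \<union> Y) \<inter> U) \<and> F ((X \<union> Y) - U)))"
  proof (intro sum.cong refl, clarify)
    fix X Y assume "X \<subseteq> U" "Y \<subseteq> S - U"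
    moreover from this have "(X \<union> Y) \<inter> U = X" "(X \<union> Y) - U = Y" by auto
    ultimately show
      "subset_weight q U X * of_bool (E X) * (subset_weight q (S - U) Y * of_bool (F Y))
        = subset_weight q S (X \<union> Y) * of_bool (E ((X \<union> Y) \<inter> U) \<and> F ((X \<union> Y) - U))"
      using assms by (simp add: subset_weight_Un)
  qed
  also have "\<dots> = event_weight q S (\<lambda>Z. E (Z \<inter> U) \<and> F (Z - U))"
    unfolding event_weight_def using sum.reindex_bij_betw[OF bij] by (simp add: case_prod_unfold)
  finally show ?thesis ..
qed

lemma event_weight_True: "finite S \<Longrightarrow> event_weight q S (\<lambda>_. True) = 1"
proof (induction S rule: finite_induct)
  case (insert x S)
  have "event_weight q (insert x S) (\<lambda>Z. True \<and> True)
      = event_weight q {x} (\<lambda>_. True) * event_weight q (insert x S - {x}) (\<lambda>_. True)"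
    using insert.hyps by (intro event_weight_independent) auto
  moreover have "event_weight q {x} (\<lambda>_. True) = 1"
    by (simp add: event_weight_def subset_weight_def Pow_singleton_iff Pow_insert)
  ultimately show ?case using insert by simp
qed (simp add: event_weight_def subset_weight_def)

lemma event_weight_not:
  assumes "finite S"
  shows "event_weight q S (\<lambda>Z. \<not> E Z) = 1 - event_weight q S E"
proof -
  have "event_weight q S (\<lambda>Z. \<not> E Z) + event_weight q S E = event_weight q S (\<lambda>_. True)"
    unfolding event_weight_def sum.distrib[symmetric] distrib_left[symmetric]
    by (intro sum.cong) (auto simp: of_bool_def)
  then show ?thesis using event_weight_True[OF assms] by simp
qed

lemma event_weight_empty:
  assumes "finite S"
  shows "event_weight q S (\<lambda>Z. Z = {}) = q ^ card S"
proof -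
  have "event_weight q S (\<lambda>Z. Z = {}) = (\<Sum>Z\<in>Pow S. if Z = {} then subset_weight q S Z else 0)"
    unfolding event_weight_def by (intro sum.cong) auto
  with assms show ?thesis by (simp add: sum.delta subset_weight_def)
qed

lemma event_weight_nonempty: "finite S \<Longrightarrow> event_weight q S (\<lambda>Z. Z \<noteq> {}) = 1 - q ^ card S"
  by (simp add: event_weight_not event_weight_empty)

lemma event_weight_subset:
  assumes "finite S" "B \<subseteq> S"
  shows "event_weight q S (\<lambda>Z. Z \<subseteq> B) = q ^ card (S - B)"
proof -
  have "event_weight q S (\<lambda>Z. Z \<subseteq> B) = event_weight q S (\<lambda>Z. True \<and> Z - B = {})"
    by (intro event_weight_cong) auto
  also have "\<dots> = event_weight q B (\<lambda>_. True) * event_weight q (S - B) (\<lambda>Y. Y = {})"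
    using assms by (rule event_weight_independent)
  finally show ?thesis
    using assms by (simp add: event_weight_True event_weight_empty finite_subset)
qed

lemma event_weight_meets_disjoint:
  assumes "finite T" "finite S" "\<And>t. t \<in> T \<Longrightarrow> U t \<subseteq> S" "disjoint_family_on U T"
  shows "event_weight q S (\<lambda>Z. \<forall>t\<in>T. Z \<inter> U t \<noteq> {}) = (\<Prod>t\<in>T. 1 - q ^ card (U t))"
  using assms
proof (induction T arbitrary: S rule: finite_induct)
  case empty
  then show ?case by (simp add: event_weight_True)
next
  case (insert t T)
  have disj: "U t \<inter> U t' = {}" if "t' \<in> T" for t'
    using insert that by (auto simp: disjoint_family_on_def)
  then have Diff_Int: "(Z - U t) \<inter> U t' = Z \<inter> U t'" if "t' \<in> T" for Z t'
    using that by blast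
  have "finite (U t)"
    using insert.prems by (meson finite_subset insertI1)
  have "event_weight q S (\<lambda>Z. \<forall>t'\<in>insert t T. Z \<inter> U t' \<noteq> {})
      = event_weight q S (\<lambda>Z. Z \<inter> U t \<noteq> {} \<and> (\<forall>t'\<in>T. (Z - U t) \<inter> U t' \<noteq> {}))"
    by (intro event_weight_cong) (simp add: Diff_Int)
  also have "\<dots> = event_weight q (U t) (\<lambda>X. X \<noteq> {})
      * event_weight q (S - U t) (\<lambda>Y. \<forall>t'\<in>T. Y \<inter> U t' \<noteq> {})"
    using insert.prems by (intro event_weight_independent) auto
  also have "event_weight q (S - U t) (\<lambda>Y. \<forall>t'\<in>T. Y \<inter> U t' \<noteq> {})
      = (\<Prod>t'\<in>T. 1 - q ^ card (U t'))"
    using insert.prems disj by (intro insert.IH) (auto intro: disjoint_family_on_mono)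
  finally show ?case
    using insert.hyps \<open>finite (U t)\<close> by (simp add: event_weight_nonempty)
qed

lemma greedy_independent_subset:
  assumes "finite S" "\<And>x. x \<in> S \<Longrightarrow> R x x" "\<And>x y. R x y \<Longrightarrow> R y x"
    and "\<And>x. x \<in> S \<Longrightarrow> card {y\<in>S. R x y} \<le> K"
  shows "\<exists>T\<subseteq>S. pairwise (\<lambda>x y. \<not> R x y) T \<and> card S \<le> K * card T"
  using assms(1,2,4)
proof (induction "card S" arbitrary: S rule: less_induct)
  case less
  show ?case
  proof (cases "S = {}")
    case False
    then obtain t where t: "t \<in> S" by blast
    define S' where "S' = S - {y. R t y}"
    have "S' \<subset> S"
      using t less.prems(2) unfolding S'_def by blast
    then have "card S' < card S" "finite S'"
      using less.prems(1) by (auto intro: psubset_card_mono finite_subset)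
    moreover have "card {y\<in>S'. R x y} \<le> K" if "x \<in> S'" for x
    proof -
      have "card {y\<in>S'. R x y} \<le> card {y\<in>S. R x y}"
        using less.prems(1) by (intro card_mono) (auto simp: S'_def)
      then show ?thesis
        using that less.prems(3)[of x] by (auto simp: S'_def)
    qed
    moreover have "R x x" if "x \<in> S'" for x
      using that less.prems(2) by (auto simp: S'_def)
    ultimately obtain T' where T': "T' \<subseteq> S'" "pairwise (\<lambda>x y. \<not> R x y) T'" "card S' \<le> K * card T'"
      using less.hyps by blast
    have "t \<notin> T'" "finite T'"
      using T'(1) \<open>finite S'\<close> less.prems(2)[OF t] by (auto simp: S'_def intro: finite_subset)
    have "card S \<le> card ({y\<in>S. R t y} \<union> S')"
      using less.prems(1) by (intro card_mono) (auto simp: S'_def)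
    also have "\<dots> \<le> card {y\<in>S. R t y} + card S'"
      by (rule card_Un_le)
    also have "\<dots> \<le> K + K * card T'"
      using less.prems(3)[OF t] T'(3) by simp
    also have "\<dots> = K * card (insert t T')"
      using \<open>t \<notin> T'\<close> \<open>finite T'\<close> by simp
    finally have "card S \<le> K * card (insert t T')" .
    moreover have "\<not> R t y \<and> \<not> R y t" if "y \<in> T'" for y
      using that T'(1) assms(3)[of y t] by (auto simp: S'_def)
    then have "pairwise (\<lambda>x y. \<not> R x y) (insert t T')"
      using T'(2) by (simp add: pairwise_insert)
    ultimately show ?thesis
      using T'(1) t \<open>S' \<subset> S\<close> by (intro exI[of _ "insert t T'"]) auto
  qed simp
qed

lemma card_transversal_gt:
  assumes "finite F" "F \<noteq> {}" "finite S" "\<forall>X\<in>F. X \<inter> S \<noteq> {}" "\<forall>p\<in>S. freq F p < 1 / c" "0 < c"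
  shows "c < card S"
proof -
  have "0 < card F"
    using assms(1,2) by (simp add: card_gt_0_iff)
  have "S \<noteq> {}"
    using assms(2,4) by auto
  have "card F \<le> card (\<Union>p\<in>S. {X\<in>F. p \<in> X})"
    using assms(4) by (intro card_mono rev_finite_subset[OF assms(1)]) auto
  also have "\<dots> \<le> (\<Sum>p\<in>S. card {X\<in>F. p \<in> X})"
    using assms(3) by (rule card_UN_le)
  finally have "real (card F) \<le> (\<Sum>p\<in>S. real (card {X\<in>F. p \<in> X}))"
    by (metis of_nat_le_iff of_nat_sum)
  also have "\<dots> < (\<Sum>p\<in>S. card F / c)"
  proof (rule sum_strict_mono[OF assms(3) \<open>S \<noteq> {}\<close>])
    fix p assume "p \<in> S"
    then have "card {X\<in>F. p \<in> X} / card F < 1 / c"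
      using assms(5) by (simp add: freq_def)
    then show "real (card {X\<in>F. p \<in> X}) < card F / c"
      using assms(6) \<open>0 < card F\<close> by (simp add: field_simps)
  qed
  finally show ?thesis
    using assms(6) \<open>0 < card F\<close> by (simp add: field_simps)
qed

lemma half_powr_lt_inverse:
  fixes N x :: real
  assumes "1 \<le> N" "log (4/3) N < x"
  shows "(1/2) powr x < 1 / N"
proof -
  have "(1/2) powr x < (1/2) powr log (4/3) N"
    using assms(2) by (intro powr_less_mono') auto
  also have "\<dots> \<le> (3/4) powr log (4/3) N"
    using assms(1) by (intro powr_mono2) auto
  also have "\<dots> = inverse ((4/3) powr log (4/3) N)"
    by (simp flip: inverse_powr)
  also have "\<dots> = 1 / N"
    using assms(1) by (simp add: inverse_eq_divide)
  finally show ?thesis .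
qed

lemma partial_order_on_set_refl: "partial_order_on_set P le \<Longrightarrow> x \<in> P \<Longrightarrow> le x x"
  by (simp add: partial_order_on_set_def)

lemma partial_order_on_set_trans:
  "partial_order_on_set P le \<Longrightarrow> x \<in> P \<Longrightarrow> y \<in> P \<Longrightarrow> z \<in> P \<Longrightarrow> le x y \<Longrightarrow> le y z \<Longrightarrow> le x z"
  unfolding partial_order_on_set_def by blast

definition down_closure :: "'a set \<Rightarrow> ('a \<Rightarrow> 'a \<Rightarrow> bool) \<Rightarrow> 'a set \<Rightarrow> 'a set" where
  "down_closure P le Z = {p\<in>P. \<exists>z\<in>Z. le p z}"

lemma is_downset_down_closure:
  assumes "partial_order_on_set P le" "Z \<subseteq> P"
  shows "is_downset P le (down_closure P le Z)"
  using assms partial_order_on_set_trans[OF assms(1)]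
  unfolding is_downset_def down_closure_def by blast

lemma subset_down_closure:
  assumes "partial_order_on_set P le" "Z \<subseteq> P"
  shows "Z \<subseteq> down_closure P le Z"
  using assms partial_order_on_set_refl[OF assms(1)] unfolding down_closure_def by blast

lemma dual_over_down_closure:
  assumes "partial_order_on_set P le" "dual_over P le \<A> \<B>" "Z \<subseteq> P"
  shows "(\<exists>A\<in>\<A>. A \<subseteq> down_closure P le Z) \<or> (\<exists>B\<in>\<B>. Z \<subseteq> B)"
proof -
  have "(\<exists>B\<in>\<B>. down_closure P le Z \<subseteq> B) \<or> (\<exists>A\<in>\<A>. A \<subseteq> down_closure P le Z)"
    using assms(2) is_downset_down_closure[OF assms(1,3)] unfolding dual_over_def by blast
  then show ?thesis
    using subset_down_closure[OF assms(1,3)] by blast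
qed

lemma Max_card_down_up:
  assumes "finite P" "P \<noteq> {}" "partial_order_on_set P le"
    and "m = Max ((\<lambda>p. card (down P le p) + card (up P le p)) ` P)"
  shows "0 < m" "\<And>p. p \<in> P \<Longrightarrow> card (down P le p) \<le> m" "\<And>p. p \<in> P \<Longrightarrow> card (up P le p) \<le> m"
proof -
  have sum_le: "card (down P le p) + card (up P le p) \<le> m" if "p \<in> P" for p
    unfolding assms(4) using that assms(1) by (intro Max_ge) auto
  then show "card (down P le p) \<le> m" "card (up P le p) \<le> m" if "p \<in> P" for p
    using that by fastforce+
  obtain p where "p \<in> P"
    using assms(2) by blast
  then have "0 < card (up P le p)"
    using assms(1) partial_order_on_set_refl[OF assms(3)] by (auto simp: up_def card_gt_0_iff)
  with sum_le[OF \<open>p \<in> P\<close>] show "0 < m"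
    by linarith
qed

lemma exists_subset_disjoint_up:
  assumes "finite P" "partial_order_on_set P le" "A \<subseteq> P"
    and "\<And>p. p \<in> P \<Longrightarrow> card (down P le p) \<le> m" "\<And>p. p \<in> P \<Longrightarrow> card (up P le p) \<le> m"
  shows "\<exists>T\<subseteq>A. disjoint_family_on (up P le) T \<and> card A \<le> m * m * card T"
proof -
  let ?R = "\<lambda>x y. up P le x \<inter> up P le y \<noteq> {}"
  have "card {y\<in>A. ?R x y} \<le> m * m" if "x \<in> A" for x
  proof -
    have "{y\<in>A. ?R x y} \<subseteq> (\<Union>s\<in>up P le x. down P le s)"
      using assms(3) unfolding up_def down_def by blast
    then have "card {y\<in>A. ?R x y} \<le> card (\<Union>s\<in>up P le x. down P le s)"
      by (intro card_mono rev_finite_subset[OF assms(1)]) (auto simp: down_def)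
    also have "\<dots> \<le> (\<Sum>s\<in>up P le x. card (down P le s))"
      using assms(1) by (intro card_UN_le) (simp add: up_def)
    also have "\<dots> \<le> (\<Sum>s\<in>up P le x. m)"
      by (intro sum_mono assms(4)) (simp add: up_def)
    also have "\<dots> \<le> m * m"
      using assms(3,5) that by auto
    finally show ?thesis .
  qed
  moreover have "?R x x" if "x \<in> A" for x
    using that assms(2,3) partial_order_on_set_refl[OF assms(2)] unfolding up_def by blast
  ultimately obtain T where "T \<subseteq> A" "pairwise (\<lambda>x y. \<not> ?R x y) T" "card A \<le> m * m * card T"
    using greedy_independent_subset[of A ?R "m * m"] assms(1,3) finite_subset by blast
  then show ?thesis
    by (auto simp: disjoint_family_on_def pairwise_def)
qed

text \<open>
  A \<subseteq> down_closure P le Z forces Z to meet the up-set of every element of A; restricting to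
  elements with pairwise disjoint up-sets makes these events independent.
\<close>

lemma event_weight_down_closure_le:
  assumes "finite P" "partial_order_on_set P le" "A \<subseteq> P" "0 < m" "0 < q" "q < 1"
    and "\<And>p. p \<in> P \<Longrightarrow> card (down P le p) \<le> m" "\<And>p. p \<in> P \<Longrightarrow> card (up P le p) \<le> m"
  shows "event_weight q P (\<lambda>Z. A \<subseteq> down_closure P le Z) \<le> (1 - q ^ m) powr (card A / (real m)\<^sup>2)"
proof -
  obtain T where T: "T \<subseteq> A" "disjoint_family_on (up P le) T" "card A \<le> m * m * card T"
    using exists_subset_disjoint_up[OF assms(1-3,7,8)] by blast
  have "finite T"
    using T(1) assms(3) by (intro rev_finite_subset[OF assms(1)]) blast
  have "q ^ m < 1"
    using assms(4-6) by (simp add: power_less_one_iff)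
  have "\<forall>t\<in>T. Z \<inter> up P le t \<noteq> {}" if "Z \<subseteq> P" "A \<subseteq> down_closure P le Z" for Z
    using that T(1) unfolding down_closure_def up_def by blast
  then have "event_weight q P (\<lambda>Z. A \<subseteq> down_closure P le Z)
      \<le> event_weight q P (\<lambda>Z. \<forall>t\<in>T. Z \<inter> up P le t \<noteq> {})"
    using assms(5,6) by (intro event_weight_mono) auto
  also have "\<dots> = (\<Prod>t\<in>T. 1 - q ^ card (up P le t))"
    by (intro event_weight_meets_disjoint \<open>finite T\<close> assms(1) T(2)) (simp add: up_def)
  also have "\<dots> \<le> (\<Prod>t\<in>T. 1 - q ^ m)"
  proof (intro prod_mono conjI)
    fix t assume "t \<in> T"
    then have "t \<in> P"
      using T(1) assms(3) by blast
    then have "q ^ m \<le> q ^ card (up P le t)"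
      using assms(5,6) by (intro power_decreasing assms(8)) auto
    moreover have "q ^ card (up P le t) \<le> 1"
      using assms(5,6) by (intro power_le_one) auto
    ultimately show "0 \<le> 1 - q ^ card (up P le t)" "1 - q ^ card (up P le t) \<le> 1 - q ^ m"
      by simp_all
  qed
  also have "\<dots> = (1 - q ^ m) powr card T"
    using \<open>q ^ m < 1\<close> by (simp add: powr_realpow)
  also have "\<dots> \<le> (1 - q ^ m) powr (card A / (real m)\<^sup>2)"
  proof (rule powr_mono')
    have "real (card A) \<le> (real m)\<^sup>2 * card T"
      using T(3) of_nat_mono[OF T(3), where 'a=real] by (simp add: power2_eq_square)
    then show "card A / (real m)\<^sup>2 \<le> card T"
      using assms(4) by (simp add: field_simps)
  qed (use assms(5,6) in \<open>auto intro: power_le_one\<close>)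
  finally show ?thesis .
qed

lemma dual_over_event_weight_ge:
  assumes "finite P" "partial_order_on_set P le" "dual_over P le \<A> \<B>" "\<forall>B\<in>\<B>. B \<subseteq> P"
    and "finite \<A>" "finite \<B>" "0 \<le> q" "q \<le> 1"
  shows "1 \<le> (\<Sum>A\<in>\<A>. event_weight q P (\<lambda>Z. A \<subseteq> down_closure P le Z)) + (\<Sum>B\<in>\<B>. q ^ card (P - B))"
proof -
  have "1 = event_weight q P (\<lambda>_. True)"
    using assms(1) by (simp add: event_weight_True)
  also have "\<dots> \<le> event_weight q P (\<lambda>Z. (\<exists>A\<in>\<A>. A \<subseteq> down_closure P le Z) \<or> (\<exists>B\<in>\<B>. Z \<subseteq> B))"
    by (intro event_weight_mono assms(7,8)) (simp add: dual_over_down_closure[OF assms(2,3)])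
  also have "\<dots> \<le> event_weight q P (\<lambda>Z. \<exists>A\<in>\<A>. A \<subseteq> down_closure P le Z)
      + event_weight q P (\<lambda>Z. \<exists>B\<in>\<B>. Z \<subseteq> B)"
    using assms(7,8) by (rule event_weight_disj_le)
  also have "\<dots> \<le> (\<Sum>A\<in>\<A>. event_weight q P (\<lambda>Z. A \<subseteq> down_closure P le Z))
      + (\<Sum>B\<in>\<B>. event_weight q P (\<lambda>Z. Z \<subseteq> B))"
    using assms(5-8) by (intro add_mono event_weight_Bex_le)
  also have "(\<Sum>B\<in>\<B>. event_weight q P (\<lambda>Z. Z \<subseteq> B)) = (\<Sum>B\<in>\<B>. q ^ card (P - B))"
    using assms(1,4) by (intro sum.cong) (simp_all add: event_weight_subset)
  finally show ?thesis .
qed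

theorem dual_over_exists_small_member:
  assumes "finite P" "partial_order_on_set P le" "\<forall>A\<in>\<A>. A \<subseteq> P" "\<forall>B\<in>\<B>. B \<subseteq> P"
    and "\<A> \<noteq> {}" "\<B> \<noteq> {}" "dual_over P le \<A> \<B>" "0 < m"
    and "\<And>p. p \<in> P \<Longrightarrow> card (down P le p) \<le> m" "\<And>p. p \<in> P \<Longrightarrow> card (up P le p) \<le> m"
  defines "L \<equiv> log (4/3) (card \<A> + card \<B>)"
  shows "(\<exists>A\<in>\<A>. card A \<le> (real m)\<^sup>2 * L) \<or> (\<exists>B\<in>\<B>. card (P - B) \<le> real m * L)"
proof (rule ccontr)
  define N where "N = real (card \<A> + card \<B>)"
  assume "\<not> ?thesis"
  then have large_A: "(real m)\<^sup>2 * L < card A" if "A \<in> \<A>" for A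
    using that by (auto simp: not_le)
  from \<open>\<not> ?thesis\<close> have large_B: "real m * L < card (P - B)" if "B \<in> \<B>" for B
    using that by (auto simp: not_le)
  have fin: "finite \<A>" "finite \<B>"
    using assms(1,3,4) by (auto intro: rev_finite_subset[of "Pow P"])
  then have "0 < card \<A>"
    using assms(5) by (simp add: card_gt_0_iff)
  then have "1 \<le> N"
    by (simp add: N_def)
  define q where "q = (1/2::real) powr (1 / m)"
    \<comment> \<open>so that an up-set, of at most m elements, is hit by Z with probability at most 1/2\<close>
  have q: "0 < q" "q < 1"
    using assms(8) powr_less_mono2[of "1 / m" "1/2" 1] by (auto simp: q_def)
  have q_pow: "q ^ k = (1/2) powr (k / m)" for k
    by (simp add: q_def powr_powr flip: powr_realpow)
  have small_A: "event_weight q P (\<lambda>Z. A \<subseteq> down_closure P le Z) < 1 / N" if "A \<in> \<A>" for A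
  proof -
    have "event_weight q P (\<lambda>Z. A \<subseteq> down_closure P le Z) \<le> (1 - q ^ m) powr (card A / (real m)\<^sup>2)"
      using that assms q by (intro event_weight_down_closure_le) auto
    also have "\<dots> = (1/2) powr (card A / (real m)\<^sup>2)"
      using assms(8) by (simp add: q_pow)
    also have "\<dots> < 1 / N"
      using large_A[OF that] assms(8)
      by (intro half_powr_lt_inverse \<open>1 \<le> N\<close>) (simp add: L_def N_def field_simps)
    finally show ?thesis .
  qed
  have small_B: "q ^ card (P - B) < 1 / N" if "B \<in> \<B>" for B
    unfolding q_pow using large_B[OF that] assms(8)
    by (intro half_powr_lt_inverse \<open>1 \<le> N\<close>) (simp add: L_def N_def field_simps)
  have "1 \<le> (\<Sum>A\<in>\<A>. event_weight q P (\<lambda>Z. A \<subseteq> down_closure P le Z)) + (\<Sum>B\<in>\<B>. q ^ card (P - B))"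
    using assms(1,2,7,4) fin q by (intro dual_over_event_weight_ge) auto
  also have "\<dots> < (\<Sum>A\<in>\<A>. 1 / N) + (\<Sum>B\<in>\<B>. 1 / N)"
    using fin assms(5,6) small_A small_B by (intro add_strict_mono sum_strict_mono) auto
  also have "\<dots> = N * (1 / N)"
    unfolding sum_constant N_def by (simp only: of_nat_add distrib_right)
  also have "\<dots> = 1"
    using \<open>1 \<le> N\<close> by simp
  finally show False by simp
qed

lemma dual_over_card_compl_gt:
  assumes "dual_over P le \<A> \<B>" "finite P" "\<forall>A\<in>\<A>. A \<subseteq> P" "\<A> \<noteq> {}" "B \<in> \<B>"
    and "\<forall>p\<in>P. freq \<A> p < 1 / c" "0 < c"
  shows "c < card (P - B)"
proof (rule card_transversal_gt[where F = \<A>])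
  show "\<forall>A\<in>\<A>. A \<inter> (P - B) \<noteq> {}"
    using assms(1,3,5) unfolding dual_over_def by blast
  show "finite \<A>"
    using assms(2,3) by (auto intro: rev_finite_subset[of "Pow P"])
qed (use assms in auto)

lemma dual_over_card_gt:
  assumes "dual_over P le \<A> \<B>" "finite P" "\<forall>B\<in>\<B>. B \<subseteq> P" "\<B> \<noteq> {}" "A \<in> \<A>" "A \<subseteq> P"
    and "\<forall>p\<in>P. freq (compl_family P \<B>) p < 1 / c" "0 < c"
  shows "c < card A"
proof (rule card_transversal_gt[where F = "compl_family P \<B>"])
  show "\<forall>X\<in>compl_family P \<B>. X \<inter> A \<noteq> {}"
    using assms(1,5,6) unfolding compl_family_def dual_over_def by blast
  show "finite (compl_family P \<B>)"
    using assms(2,3) by (auto intro: rev_finite_subset[of "Pow P"] simp: compl_family_def)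
  show "finite A"
    using assms(2,6) by (rule rev_finite_subset)
qed (use assms in \<open>auto simp: compl_family_def\<close>)

theorem corollary4:
  fixes P :: "'a set" and le :: "'a \<Rightarrow> 'a \<Rightarrow> bool"
    and \<A> \<B> :: "'a set set" and m :: nat and N :: nat
  assumes "finite P" and "P \<noteq> {}"
    and "partial_order_on_set P le"
    and "m = Max ((\<lambda>p. card (down P le p) + card (up P le p)) ` P)"
    and "\<forall>A\<in>\<A>. is_downset P le A" and "\<forall>B\<in>\<B>. is_downset P le B"
    and "\<A> \<noteq> {}" and "\<B> \<noteq> {}"
    and "dual_over P le \<A> \<B>"
    and "N = card \<A> + card \<B>"
  shows "(\<exists>p\<in>P. freq \<A> p \<ge> 1 / (real m * log (4/3) (real N))) \<or>
         (\<exists>p\<in>P. freq (compl_family P \<B>) p \<ge> 1 / ((real m)^2 * log (4/3) (real N)))"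
proof (rule ccontr)
  define L where "L = log (4/3) (real N)"
  assume "\<not> ?thesis"
  then have freq_A: "\<forall>p\<in>P. freq \<A> p < 1 / (real m * L)"
    and freq_B: "\<forall>p\<in>P. freq (compl_family P \<B>) p < 1 / ((real m)\<^sup>2 * L)"
    by (auto simp: L_def not_le)
  have sub: "\<forall>A\<in>\<A>. A \<subseteq> P" "\<forall>B\<in>\<B>. B \<subseteq> P"
    using assms(5,6) by (auto simp: is_downset_def)
  note m = Max_card_down_up[OF assms(1-4)]
  have "finite \<A>" "finite \<B>"
    using assms(1) sub by (auto intro: rev_finite_subset[of "Pow P"])
  then have "0 < card \<A>" "0 < card \<B>"
    using assms(7,8) by (simp_all add: card_gt_0_iff)
  then have "0 < L"
    using assms(10) by (simp add: L_def)
  have "(\<exists>A\<in>\<A>. card A \<le> (real m)\<^sup>2 * L) \<or> (\<exists>B\<in>\<B>. card (P - B) \<le> real m * L)"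
    unfolding L_def assms(10) using assms(1,3,7-9) sub m
    by (intro dual_over_exists_small_member) auto
  moreover have "(real m)\<^sup>2 * L < card A" if "A \<in> \<A>" for A
    using assms(1,8,9) sub that freq_B m(1) \<open>0 < L\<close> by (intro dual_over_card_gt) auto
  moreover have "real m * L < card (P - B)" if "B \<in> \<B>" for B
    using assms(1,7,9) sub that freq_A m(1) \<open>0 < L\<close> by (intro dual_over_card_compl_gt) auto
  ultimately show False
    by (meson not_le)
qed

end
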